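(* Let $G=(V,E,\sigma)$ be a graph as in the context, $\Gamma$ a nonempty family of walks, and $1<p<\infty$. For $q>1$ let $\rho_q$ denote the unique extremal density for $\mathrm{Mod}_q(\Gamma)$. Then $\lim_{q\to p}\|\rho_p-\rho_q\|=0$ for any norm $\|\cdot\|$ on $\mathbb{R}^E$.
   Context: Let $G=(V,E,\sigma)$ be a finite simple graph (directed or undirected) with edge weights $\sigma:E\to(0,\infty)$. A walk is a string of edges $e_1\dots e_r$, $r\ge1$, $e_i=(v_i,v_{i+1})\in E$, with $\rho$-length $\ell_\rho(\gamma)=\sum_i\rho(e_i)$. $A(\Gamma)=\{\rho:E\to\mathbb{R}:\rho\ge0,\ \ell_\rho(\gamma)\ge1\ \forall\gamma\in\Gamma\}$, $\mathcal{E}_q(\rho)=\sum_e\sigma(e)|\rho(e)|^q$, $\mathrm{Mod}_q(\Gamma)=\inf_{\rho\in A(\Gamma)}\mathcal{E}_q(\rho)$; an extremal density is a minimizer in $A(\Gamma)$, unique when $1<q<\infty$. *)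

theory Defs
  imports "HOL-Analysis.Analysis"
begin

text \<open>Edges are of an arbitrary type 'e; trav e u v means that edge e may be traversed
from u to v.\<close>

definition dtrav :: "('v \<times> 'v) \<Rightarrow> 'v \<Rightarrow> 'v \<Rightarrow> bool" where
  "dtrav e u v \<longleftrightarrow> e = (u, v)"

definition utrav :: "'v set \<Rightarrow> 'v \<Rightarrow> 'v \<Rightarrow> bool" where
  "utrav e u v \<longleftrightarrow> e = {u, v}"

definition simple_digraph :: "'v set \<Rightarrow> ('v \<times> 'v) set \<Rightarrow> bool" where
  "simple_digraph V E \<longleftrightarrow> finite V \<and> E \<subseteq> V \<times> V \<and> (\<forall>v. (v, v) \<notin> E)"

definition simple_ugraph :: "'v set \<Rightarrow> 'v set set \<Rightarrow> bool" where
  "simple_ugraph V E \<longleftrightarrow> finite V \<and>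
     (\<forall>e\<in>E. \<exists>u v. u \<in> V \<and> v \<in> V \<and> u \<noteq> v \<and> e = {u, v})"

definition is_walk :: "('e \<Rightarrow> 'v \<Rightarrow> 'v \<Rightarrow> bool) \<Rightarrow> 'e set \<Rightarrow> 'e list \<Rightarrow> bool" where
  "is_walk trav E es \<longleftrightarrow> es \<noteq> [] \<and> set es \<subseteq> E \<and>
     (\<exists>vs :: 'v list. length vs = Suc (length es) \<and>
        (\<forall>i < length es. trav (es ! i) (vs ! i) (vs ! Suc i)))"

definition rho_length :: "('e \<Rightarrow> real) \<Rightarrow> 'e list \<Rightarrow> real" where
  "rho_length \<rho> \<gamma> = sum_list (map \<rho> \<gamma>)"

text \<open>Densities rho : E \<rightarrow> R are represented as functions vanishing outside E.\<close>
definition admissible :: "'e set \<Rightarrow> 'e list set \<Rightarrow> ('e \<Rightarrow> real) set" where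
  "admissible E \<Gamma> = {\<rho>. (\<forall>e. e \<notin> E \<longrightarrow> \<rho> e = 0) \<and> (\<forall>e\<in>E. \<rho> e \<ge> 0) \<and>
                        (\<forall>\<gamma>\<in>\<Gamma>. rho_length \<rho> \<gamma> \<ge> 1)}"

definition energy :: "'e set \<Rightarrow> ('e \<Rightarrow> real) \<Rightarrow> real \<Rightarrow> ('e \<Rightarrow> real) \<Rightarrow> real" where
  "energy E \<sigma> q \<rho> = (\<Sum>e\<in>E. \<sigma> e * \<bar>\<rho> e\<bar> powr q)"

definition Modq :: "'e set \<Rightarrow> ('e \<Rightarrow> real) \<Rightarrow> real \<Rightarrow> 'e list set \<Rightarrow> real" where
  "Modq E \<sigma> q \<Gamma> = Inf (energy E \<sigma> q ` admissible E \<Gamma>)"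

definition extremal_density :: "'e set \<Rightarrow> ('e \<Rightarrow> real) \<Rightarrow> real \<Rightarrow> 'e list set \<Rightarrow> ('e \<Rightarrow> real) \<Rightarrow> bool" where
  "extremal_density E \<sigma> q \<Gamma> \<rho> \<longleftrightarrow> \<rho> \<in> admissible E \<Gamma> \<and> energy E \<sigma> q \<rho> = Modq E \<sigma> q \<Gamma>"

text \<open>The (unique, for 1 < q < infinity) extremal density rho_q.\<close>
definition the_extremal :: "'e set \<Rightarrow> ('e \<Rightarrow> real) \<Rightarrow> real \<Rightarrow> 'e list set \<Rightarrow> ('e \<Rightarrow> real)" where
  "the_extremal E \<sigma> q \<Gamma> = (THE \<rho>. extremal_density E \<sigma> q \<Gamma> \<rho>)"

definition norm_on :: "'e set \<Rightarrow> (('e \<Rightarrow> real) \<Rightarrow> real) \<Rightarrow> bool" where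
  "norm_on E N \<longleftrightarrow>
     (\<forall>f g c. (\<forall>e. e \<notin> E \<longrightarrow> f e = 0) \<longrightarrow> (\<forall>e. e \<notin> E \<longrightarrow> g e = 0) \<longrightarrow>
        N f \<ge> 0 \<and> (N f = 0 \<longleftrightarrow> f = (\<lambda>_. 0)) \<and>
        N (\<lambda>e. c * f e) = \<bar>c\<bar> * N f \<and> N (\<lambda>e. f e + g e) \<le> N f + N g)"


end

theory Submission
  imports Defs
begin

(*
  Strict convexity of t \<mapsto> t powr q (q > 1) makes the energy strictly convex on the convex set
  of admissible densities, so extremal densities are unique.  Every extremal density for q \<ge> 1 has
  energy at most that of the indicator of E, hence lies in a compact box independent of q.  The
  energy is jointly continuous in (q, \<rho>), and the unique minimizer of a jointly continuous function
  over a compact set depends continuously on the parameter (Berge's maximum theorem).  Finally,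
  every norm on the finite-dimensional space R^E is dominated by a weighted l1 norm, so convergence
  of each coordinate suffices.
*)

lemma powr_midpoint_less:
  fixes a b q :: real
  assumes "0 \<le> a" "0 \<le> b" "a \<noteq> b" "1 < q"
  shows "((a + b) / 2) powr q < (a powr q + b powr q) / 2"
proof -
  have ordered: "((a + b) / 2) powr q < (a powr q + b powr q) / 2" if "0 \<le> a" "a < b" for a b
  proof -
    (* compare mean-value slopes on [a, m] and [m, b]; the derivative q z powr (q - 1) increases *)
    define m where "m = (a + b) / 2"
    have am: "a < m" "m < b" using that by (auto simp: m_def)
    have cont: "continuous_on {x..y} (\<lambda>z. z powr q)" if "0 \<le> x" for x y
      using that assms by (intro continuous_on_powr' continuous_intros) auto
    have deriv: "((\<lambda>z. z powr q) has_real_derivative q * z powr (q - 1)) (at z)" if "0 < z" for z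
      using has_real_derivative_powr[OF that] .
    have diff: "(\<lambda>z. z powr q) differentiable (at z)" if "0 < z" for z
      using deriv[OF that] real_differentiable_def by blast
    obtain l1 z1 where z1: "a < z1" "z1 < m" "((\<lambda>z. z powr q) has_real_derivative l1) (at z1)"
      "m powr q - a powr q = (m - a) * l1"
      using MVT[OF am(1) cont[OF \<open>0 \<le> a\<close>]] diff \<open>0 \<le> a\<close> by force
    obtain l2 z2 where z2: "m < z2" "z2 < b" "((\<lambda>z. z powr q) has_real_derivative l2) (at z2)"
      "b powr q - m powr q = (b - m) * l2"
      using MVT[OF am(2) cont] diff am \<open>0 \<le> a\<close> by force
    have "0 < z1" using z1 \<open>0 \<le> a\<close> by linarith
    then have "l1 = q * z1 powr (q - 1)" "l2 = q * z2 powr (q - 1)"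
      using DERIV_unique[OF z1(3) deriv] DERIV_unique[OF z2(3) deriv] z1 z2 by auto
    moreover have "z1 powr (q - 1) < z2 powr (q - 1)"
      using z1 z2 \<open>0 < z1\<close> assms by (intro powr_less_mono2) auto
    ultimately have "l1 < l2" using assms by simp
    moreover have "m - a = b - m" "0 < m - a" using am by (auto simp: m_def field_simps)
    ultimately have "m powr q - a powr q < b powr q - m powr q"
      using z1(4) z2(4) by (metis mult_strict_left_mono)
    then show ?thesis unfolding m_def by (simp add: field_simps)
  qed
  show ?thesis
    using ordered[of a b] ordered[of b a] assms by (cases a b rule: linorder_cases) (auto simp: add.commute)
qed

lemma powr_midpoint_le:
  fixes a b q :: real
  assumes "0 \<le> a" "0 \<le> b" "1 < q"
  shows "((a + b) / 2) powr q \<le> (a powr q + b powr q) / 2"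
  using powr_midpoint_less[of a b q] assms by (cases "a = b") auto

lemma tendsto_unique_argmin:
  fixes F :: "'a::topological_space \<times> 'b::topological_space \<Rightarrow> real"
  assumes cont: "continuous_on (Q \<times> K) F" and "compact K" and "p \<in> Q"
    and x_in: "\<And>q. q \<in> Q \<Longrightarrow> x q \<in> K"
    and x_min: "\<And>q y. q \<in> Q \<Longrightarrow> y \<in> K \<Longrightarrow> F (q, x q) \<le> F (q, y)"
    and unique: "\<And>y. y \<in> K \<Longrightarrow> F (p, y) \<le> F (p, x p) \<Longrightarrow> y = x p"
  shows "(x \<longlongrightarrow> x p) (at p within Q)"
proof (rule topological_tendstoI)
  fix U assume "open U" "x p \<in> U"
  show "eventually (\<lambda>q. x q \<in> U) (at p within Q)"
  proof (cases "K - U = {}")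
    case True
    then show ?thesis unfolding eventually_at_filter using x_in by (auto intro!: always_eventually)
  next
    case False
    have "compact (K - U)" using \<open>compact K\<close> \<open>open U\<close> by (rule compact_diff)
    moreover have "continuous_on (K - U) (\<lambda>y. F (p, y))"
      using \<open>p \<in> Q\<close> by (intro continuous_on_compose2[OF cont] continuous_intros) auto
    ultimately obtain y0 where y0: "y0 \<in> K - U" "\<And>y. y \<in> K - U \<Longrightarrow> F (p, y0) \<le> F (p, y)"
      using continuous_attains_inf[OF _ False] by meson
    (* F (p, _) exceeds its minimum by 3 e on K - U, and F (q, _) is e-close to it for q near p *)
    define e where "e = (F (p, y0) - F (p, x p)) / 3"
    have "F (p, x p) < F (p, y0)"
      using unique[of y0] y0(1) \<open>x p \<in> U\<close> by fastforce
    then have "0 < e" and e3: "3 * e = F (p, y0) - F (p, x p)" by (simp_all add: e_def)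
    have "compact (insert (x p) (K - U))" using \<open>compact (K - U)\<close> by simp
    moreover have "continuous_on (Q \<times> insert (x p) (K - U)) F"
      using x_in[OF \<open>p \<in> Q\<close>] by (intro continuous_on_subset[OF cont]) auto
    ultimately obtain X0 where X0: "p \<in> X0" "open X0"
      "\<And>q y. q \<in> X0 \<inter> Q \<Longrightarrow> y \<in> insert (x p) (K - U) \<Longrightarrow> dist (F (q, y)) (F (p, y)) \<le> e"
      using continuous_on_prod_compactE[OF _ _ \<open>p \<in> Q\<close> \<open>0 < e\<close>] by metis
    have "x q \<in> U" if "q \<in> X0" "q \<in> Q" for q
    proof (rule ccontr)
      assume "x q \<notin> U"
      then have "x q \<in> K - U" using x_in \<open>q \<in> Q\<close> by simp
      have "F (p, y0) - e \<le> F (q, x q)"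
        using X0(3)[of q "x q"] y0(2)[OF \<open>x q \<in> K - U\<close>] that \<open>x q \<in> K - U\<close>
        by (auto simp: dist_real_def)
      also have "F (q, x q) \<le> F (q, x p)" using x_min x_in \<open>p \<in> Q\<close> \<open>q \<in> Q\<close> by simp
      also have "F (q, x p) \<le> F (p, x p) + e"
        using X0(3)[of q "x p"] that by (auto simp: dist_real_def)
      finally show False using \<open>0 < e\<close> e3 by linarith
    qed
    then show ?thesis using X0(1,2) by (auto simp: eventually_at_topological)
  qed
qed

lemma norm_onD:
  assumes "norm_on E N" "\<forall>e. e \<notin> E \<longrightarrow> f e = 0" "\<forall>e. e \<notin> E \<longrightarrow> g e = 0"
  shows "0 \<le> N f" "N f = 0 \<longleftrightarrow> f = (\<lambda>_. 0)" "N (\<lambda>e. c * f e) = \<bar>c\<bar> * N f"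
    "N (\<lambda>e. f e + g e) \<le> N f + N g"
  using assms(1)[unfolded norm_on_def, rule_format, of f g c] assms(2,3) by auto

lemma norm_on_le_sum_indicator:
  assumes N: "norm_on E N" and "finite F" "F \<subseteq> E" "\<forall>e. e \<notin> F \<longrightarrow> f e = 0"
  shows "N f \<le> (\<Sum>e\<in>F. \<bar>f e\<bar> * N (indicator {e}))"
  using assms(2-)
proof (induction F arbitrary: f rule: finite_induct)
  case empty
  then have "f = (\<lambda>_. 0)" by auto
  then show ?case using norm_onD(2)[OF N, of f f] by simp
next
  case (insert a F)
  define g where "g = f(a := 0)"
  have g_out: "\<forall>e. e \<notin> E \<longrightarrow> g e = 0" and ind_out: "\<forall>e. e \<notin> E \<longrightarrow> indicator {a} e = (0::real)"
    using insert.prems by (auto simp: g_def split: split_indicator)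
  have ind_out': "\<forall>e. e \<notin> E \<longrightarrow> f a * indicator {a} e = (0::real)" using ind_out by simp
  have "(\<lambda>e. g e + f a * indicator {a} e) = f" by (auto simp: g_def split: split_indicator)
  then have "N f \<le> N g + N (\<lambda>e. f a * indicator {a} e)"
    using norm_onD(4)[OF N g_out ind_out'] by simp
  also have "N (\<lambda>e. f a * indicator {a} e) = \<bar>f a\<bar> * N (indicator {a})"
    using norm_onD(3)[OF N ind_out ind_out] by simp
  also have "N g \<le> (\<Sum>e\<in>F. \<bar>g e\<bar> * N (indicator {e}))"
    using insert.prems by (intro insert.IH) (auto simp: g_def)
  also have "\<dots> = (\<Sum>e\<in>F. \<bar>f e\<bar> * N (indicator {e}))"
    using insert.hyps by (intro sum.cong) (auto simp: g_def)
  finally show ?case using insert.hyps by (simp add: add.commute)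
qed

lemma tendsto_norm_on_zero:
  assumes N: "norm_on E N" and "finite E"
    and vanish: "eventually (\<lambda>x. \<forall>e. e \<notin> E \<longrightarrow> f x e = 0) F"
    and lim: "\<And>e. e \<in> E \<Longrightarrow> ((\<lambda>x. f x e) \<longlongrightarrow> 0) F"
  shows "((\<lambda>x. N (f x)) \<longlongrightarrow> 0) F"
proof (rule tendsto_sandwich[OF _ _ tendsto_const])
  show "eventually (\<lambda>x. 0 \<le> N (f x)) F"
    using vanish by eventually_elim (use norm_onD(1)[OF N] in blast)
  show "eventually (\<lambda>x. N (f x) \<le> (\<Sum>e\<in>E. \<bar>f x e\<bar> * N (indicator {e}))) F"
    using vanish by eventually_elim (use norm_on_le_sum_indicator[OF N \<open>finite E\<close>] in blast)
  show "((\<lambda>x. \<Sum>e\<in>E. \<bar>f x e\<bar> * N (indicator {e})) \<longlongrightarrow> 0) F"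
    using lim by (intro tendsto_null_sum tendsto_mult_left_zero tendsto_rabs_zero)
qed

lemma rho_length_midpoint:
  "rho_length (\<lambda>e. (f e + g e) / 2) \<gamma> = (rho_length f \<gamma> + rho_length g \<gamma>) / 2"
  by (induction \<gamma>) (auto simp: rho_length_def field_simps)

lemma continuous_on_rho_length: "continuous_on S (\<lambda>\<rho>. rho_length \<rho> \<gamma>)"
  unfolding rho_length_def
  by (induction \<gamma>) (auto intro!: continuous_intros continuous_on_subset[OF continuous_on_product_coordinates])

lemma admissible_nonneg: "\<rho> \<in> admissible E \<Gamma> \<Longrightarrow> 0 \<le> \<rho> e"
  unfolding admissible_def by (cases "e \<in> E") auto

lemma admissible_outside: "\<rho> \<in> admissible E \<Gamma> \<Longrightarrow> e \<notin> E \<Longrightarrow> \<rho> e = 0"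
  unfolding admissible_def by auto

lemma closed_admissible: "closed (admissible E \<Gamma>)"
proof -
  have "admissible E \<Gamma> = (\<Inter>e\<in>-E. {\<rho>. \<rho> e = 0}) \<inter> (\<Inter>e\<in>E. {\<rho>. 0 \<le> \<rho> e})
        \<inter> (\<Inter>\<gamma>\<in>\<Gamma>. {\<rho>. 1 \<le> rho_length \<rho> \<gamma>})"
    unfolding admissible_def by auto
  then show ?thesis
    by (simp only:) (intro closed_Int closed_INT ballI closed_Collect_eq closed_Collect_le
          continuous_on_const continuous_on_product_coordinates continuous_on_rho_length)
qed

lemma midpoint_admissible:
  assumes "\<rho>1 \<in> admissible E \<Gamma>" "\<rho>2 \<in> admissible E \<Gamma>"
  shows "(\<lambda>e. (\<rho>1 e + \<rho>2 e) / 2) \<in> admissible E \<Gamma>"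
proof -
  have "1 \<le> (rho_length \<rho>1 \<gamma> + rho_length \<rho>2 \<gamma>) / 2" if "\<gamma> \<in> \<Gamma>" for \<gamma>
    using assms that unfolding admissible_def by fastforce
  then show ?thesis
    using assms unfolding admissible_def by (auto simp: rho_length_midpoint)
qed

lemma energy_admissible:
  assumes "\<rho> \<in> admissible E \<Gamma>"
  shows "energy E \<sigma> q \<rho> = (\<Sum>e\<in>E. \<sigma> e * \<rho> e powr q)"
  unfolding energy_def using admissible_nonneg[OF assms] by simp

lemma continuous_on_energy:
  "continuous_on ({0<..} \<times> UNIV) (\<lambda>z. energy E \<sigma> (fst z) (snd z))"
proof -
  have "continuous_on S (\<lambda>z. snd z e)" for S :: "(real \<times> ('e \<Rightarrow> real)) set" and e
    by (rule continuous_on_product_then_coordinatewise[OF continuous_on_snd[OF continuous_on_id]])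
  then show ?thesis
    unfolding energy_def
    by (intro continuous_on_sum continuous_on_mult continuous_on_const continuous_on_powr'
        continuous_on_rabs continuous_on_fst) auto
qed

locale modulus_problem =
  fixes E :: "'e set" and \<sigma> :: "'e \<Rightarrow> real" and \<Gamma> :: "'e list set"
  assumes finite_edges: "finite E"
    and weight_pos: "\<And>e. e \<in> E \<Longrightarrow> 0 < \<sigma> e"
    and walk_nonempty: "\<And>\<gamma>. \<gamma> \<in> \<Gamma> \<Longrightarrow> \<gamma> \<noteq> []"
    and walk_edges: "\<And>\<gamma>. \<gamma> \<in> \<Gamma> \<Longrightarrow> set \<gamma> \<subseteq> E"
begin

lemma energy_nonneg: "0 \<le> energy E \<sigma> q \<rho>"
  unfolding energy_def using weight_pos by (intro sum_nonneg) (simp add: less_imp_le)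

lemma extremal_density_iff:
  "extremal_density E \<sigma> q \<Gamma> \<rho> \<longleftrightarrow>
     \<rho> \<in> admissible E \<Gamma> \<and> (\<forall>\<rho>'\<in>admissible E \<Gamma>. energy E \<sigma> q \<rho> \<le> energy E \<sigma> q \<rho>')"
proof -
  have "bdd_below (energy E \<sigma> q ` admissible E \<Gamma>)"
    using energy_nonneg by (intro bdd_belowI[of _ 0]) auto
  then have "Modq E \<sigma> q \<Gamma> \<le> energy E \<sigma> q \<rho>'" if "\<rho>' \<in> admissible E \<Gamma>" for \<rho>'
    unfolding Modq_def using that by (intro cInf_lower) auto
  moreover have "Modq E \<sigma> q \<Gamma> = energy E \<sigma> q \<rho>"
    if "\<rho> \<in> admissible E \<Gamma>" "\<forall>\<rho>'\<in>admissible E \<Gamma>. energy E \<sigma> q \<rho> \<le> energy E \<sigma> q \<rho>'"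
    unfolding Modq_def using that by (intro cInf_eq_minimum) auto
  ultimately show ?thesis unfolding extremal_density_def by auto
qed

lemma indicator_admissible: "indicator E \<in> admissible E \<Gamma>"
proof -
  have "rho_length (indicator E) \<gamma> = length \<gamma>" if "set \<gamma> \<subseteq> E" for \<gamma>
    using that by (induction \<gamma>) (auto simp: rho_length_def)
  then have "1 \<le> rho_length (indicator E) \<gamma>" if "\<gamma> \<in> \<Gamma>" for \<gamma>
    using walk_nonempty[OF that] walk_edges[OF that] by (simp add: Suc_le_eq)
  then show ?thesis unfolding admissible_def by auto
qed

lemma energy_indicator: "0 < q \<Longrightarrow> energy E \<sigma> q (indicator E) = sum \<sigma> E"
  unfolding energy_def by simp

definition edge_bound :: "'e \<Rightarrow> real" where
  "edge_bound e = max 1 (sum \<sigma> E / \<sigma> e)"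

definition bounded_admissible :: "('e \<Rightarrow> real) set" where
  "bounded_admissible = admissible E \<Gamma> \<inter> Pi UNIV (\<lambda>e. {0..edge_bound e})"

lemma compact_bounded_admissible: "compact bounded_admissible"
proof -
  have "compactin (product_topology (\<lambda>_. euclidean) UNIV) (PiE UNIV (\<lambda>e. {0..edge_bound e}))"
    by (subst compactin_PiE) auto
  then have "compact (Pi UNIV (\<lambda>e. {0..edge_bound e}))"
    by (simp add: euclidean_product_topology PiE_UNIV_domain)
  then show ?thesis
    unfolding bounded_admissible_def Int_commute[of "admissible E \<Gamma>"]
    using closed_admissible by (rule compact_Int_closed)
qed

(* sum \<sigma> E is the energy of indicator E, so the minimizers for all q \<ge> 1 lie in this one box. *)
lemma low_energy_bounded_admissible:
  assumes "1 \<le> q" "\<rho> \<in> admissible E \<Gamma>" "energy E \<sigma> q \<rho> \<le> sum \<sigma> E"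
  shows "\<rho> \<in> bounded_admissible"
proof -
  have "\<rho> e \<le> edge_bound e" for e
  proof (cases "e \<in> E")
    case True
    have "\<sigma> e * \<rho> e powr q \<le> (\<Sum>x\<in>E. \<sigma> x * \<rho> x powr q)"
      using weight_pos by (intro member_le_sum[OF True _ finite_edges]) (simp add: less_imp_le)
    also have "\<dots> \<le> sum \<sigma> E" using assms(3) energy_admissible[OF assms(2)] by simp
    finally have "\<sigma> e * \<rho> e powr q \<le> sum \<sigma> E" .
    then have "\<rho> e powr q \<le> sum \<sigma> E / \<sigma> e"
      using weight_pos[OF True] by (simp add: field_simps)
    moreover have "\<rho> e \<le> max 1 (\<rho> e powr q)"
      using powr_mono[of 1 q "\<rho> e"] assms(1) by (cases "1 \<le> \<rho> e") auto
    ultimately show ?thesis unfolding edge_bound_def by linarith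
  qed (use admissible_outside[OF assms(2)] in \<open>simp add: edge_bound_def\<close>)
  then show ?thesis
    using admissible_nonneg[OF assms(2)] assms(2) unfolding bounded_admissible_def by auto
qed

lemma continuous_on_energy_at:
  assumes "0 < q"
  shows "continuous_on S (energy E \<sigma> q)"
proof -
  have "continuous_on S (\<lambda>\<rho>. energy E \<sigma> (fst (q, \<rho>)) (snd (q, \<rho>)))"
    using assms by (intro continuous_on_compose2[OF continuous_on_energy]
        continuous_on_Pair[OF continuous_on_const continuous_on_id]) auto
  then show ?thesis by simp
qed

lemma extremal_density_exists:
  assumes "1 < q"
  shows "\<exists>\<rho>. extremal_density E \<sigma> q \<Gamma> \<rho>"
proof -
  have ind: "indicator E \<in> bounded_admissible"
    using assms by (intro low_energy_bounded_admissible indicator_admissible) (auto simp: energy_indicator)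
  then obtain \<rho>0 where \<rho>0: "\<rho>0 \<in> bounded_admissible"
    "\<And>\<rho>. \<rho> \<in> bounded_admissible \<Longrightarrow> energy E \<sigma> q \<rho>0 \<le> energy E \<sigma> q \<rho>"
    using continuous_attains_inf[OF compact_bounded_admissible _ continuous_on_energy_at] assms
    by (metis empty_iff less_trans zero_less_one)
  have "energy E \<sigma> q \<rho>0 \<le> energy E \<sigma> q \<rho>" if "\<rho> \<in> admissible E \<Gamma>" for \<rho>
  proof (cases "energy E \<sigma> q \<rho> \<le> sum \<sigma> E")
    case True
    then show ?thesis using assms that by (intro \<rho>0(2) low_energy_bounded_admissible) auto
  next
    case False
    then show ?thesis using \<rho>0(2)[OF ind] assms energy_indicator by simp
  qed
  then show ?thesis
    using \<rho>0(1) unfolding extremal_density_iff bounded_admissible_def by blast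
qed

lemma energy_midpoint_less:
  assumes "1 < q" "\<rho>1 \<in> admissible E \<Gamma>" "\<rho>2 \<in> admissible E \<Gamma>" "\<rho>1 \<noteq> \<rho>2"
  shows "energy E \<sigma> q (\<lambda>e. (\<rho>1 e + \<rho>2 e) / 2) < (energy E \<sigma> q \<rho>1 + energy E \<sigma> q \<rho>2) / 2"
proof -
  obtain e where "\<rho>1 e \<noteq> \<rho>2 e" using assms(4) by auto
  then have "e \<in> E" using admissible_outside[OF assms(2)] admissible_outside[OF assms(3)] by metis
  have "(\<Sum>x\<in>E. \<sigma> x * ((\<rho>1 x + \<rho>2 x) / 2) powr q) < (\<Sum>x\<in>E. \<sigma> x * ((\<rho>1 x powr q + \<rho>2 x powr q) / 2))"
  proof (rule sum_strict_mono_ex1[OF finite_edges])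
    show "\<forall>x\<in>E. \<sigma> x * ((\<rho>1 x + \<rho>2 x) / 2) powr q \<le> \<sigma> x * ((\<rho>1 x powr q + \<rho>2 x powr q) / 2)"
      using weight_pos powr_midpoint_le[OF admissible_nonneg[OF assms(2)] admissible_nonneg[OF assms(3)] assms(1)]
      by (auto intro!: mult_left_mono less_imp_le)
    have "((\<rho>1 e + \<rho>2 e) / 2) powr q < (\<rho>1 e powr q + \<rho>2 e powr q) / 2"
      using \<open>\<rho>1 e \<noteq> \<rho>2 e\<close> assms(1) admissible_nonneg assms(2,3) by (intro powr_midpoint_less)
    then show "\<exists>x\<in>E. \<sigma> x * ((\<rho>1 x + \<rho>2 x) / 2) powr q < \<sigma> x * ((\<rho>1 x powr q + \<rho>2 x powr q) / 2)"
      using \<open>e \<in> E\<close> weight_pos by auto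
  qed
  then show ?thesis
    using midpoint_admissible[OF assms(2,3)]
    by (simp add: energy_admissible[OF assms(2)] energy_admissible[OF assms(3)] energy_admissible
        ring_distribs add_divide_distrib sum.distrib sum_divide_distrib[symmetric])
qed

lemma extremal_density_unique:
  assumes "1 < q" "extremal_density E \<sigma> q \<Gamma> \<rho>1" "extremal_density E \<sigma> q \<Gamma> \<rho>2"
  shows "\<rho>1 = \<rho>2"
proof (rule ccontr)
  assume "\<rho>1 \<noteq> \<rho>2"
  have adm: "\<rho>1 \<in> admissible E \<Gamma>" "\<rho>2 \<in> admissible E \<Gamma>"
    using assms unfolding extremal_density_def by auto
  have "energy E \<sigma> q \<rho>1 \<le> energy E \<sigma> q (\<lambda>e. (\<rho>1 e + \<rho>2 e) / 2)"
    using assms(2) midpoint_admissible[OF adm] unfolding extremal_density_iff by blast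
  moreover have "energy E \<sigma> q \<rho>1 = energy E \<sigma> q \<rho>2"
    using assms(2,3) unfolding extremal_density_def by simp
  ultimately show False using energy_midpoint_less[OF assms(1) adm \<open>\<rho>1 \<noteq> \<rho>2\<close>] by simp
qed

lemma extremal_density_the_extremal:
  "1 < q \<Longrightarrow> extremal_density E \<sigma> q \<Gamma> (the_extremal E \<sigma> q \<Gamma>)"
  unfolding the_extremal_def using extremal_density_exists extremal_density_unique by (metis theI)

lemma the_extremal_bounded_admissible:
  assumes "1 < q"
  shows "the_extremal E \<sigma> q \<Gamma> \<in> bounded_admissible"
proof -
  have "energy E \<sigma> q (the_extremal E \<sigma> q \<Gamma>) \<le> energy E \<sigma> q (indicator E)"
    using extremal_density_the_extremal[OF assms] indicator_admissible
    unfolding extremal_density_iff by blast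
  then show ?thesis
    using assms extremal_density_the_extremal[OF assms] energy_indicator[of q]
    by (intro low_energy_bounded_admissible[of q]) (auto simp: extremal_density_def)
qed

lemma tendsto_the_extremal:
  assumes "1 < p"
  shows "((\<lambda>q. the_extremal E \<sigma> q \<Gamma>) \<longlongrightarrow> the_extremal E \<sigma> p \<Gamma>) (at p)"
proof -
  let ?F = "\<lambda>z. energy E \<sigma> (fst z) (snd z)" and ?x = "\<lambda>q. the_extremal E \<sigma> q \<Gamma>"
  have "(?x \<longlongrightarrow> ?x p) (at p within {1<..})"
  proof (rule tendsto_unique_argmin[OF _ compact_bounded_admissible])
    show "continuous_on ({1<..} \<times> bounded_admissible) ?F"
      by (rule continuous_on_subset[OF continuous_on_energy]) auto
    show "?F (q, ?x q) \<le> ?F (q, y)" if "q \<in> {1<..}" "y \<in> bounded_admissible" for q y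
    proof -
      have "extremal_density E \<sigma> q \<Gamma> (?x q)" using that(1) extremal_density_the_extremal by simp
      moreover have "y \<in> admissible E \<Gamma>" using that(2) by (simp add: bounded_admissible_def)
      ultimately show ?thesis unfolding extremal_density_iff by simp
    qed
    show "y = ?x p" if "y \<in> bounded_admissible" "?F (p, y) \<le> ?F (p, ?x p)" for y
    proof (rule extremal_density_unique[OF assms _ extremal_density_the_extremal[OF assms]])
      have "y \<in> admissible E \<Gamma>" using that(1) by (simp add: bounded_admissible_def)
      moreover have "energy E \<sigma> p y \<le> energy E \<sigma> p \<rho>" if "\<rho> \<in> admissible E \<Gamma>" for \<rho>
        using that \<open>?F (p, y) \<le> ?F (p, ?x p)\<close> extremal_density_the_extremal[OF assms]
        unfolding extremal_density_iff by fastforce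
      ultimately show "extremal_density E \<sigma> p \<Gamma> y" unfolding extremal_density_iff by blast
    qed
    show "p \<in> {1<..}" using assms by simp
    show "?x q \<in> bounded_admissible" if "q \<in> {1<..}" for q
      using that the_extremal_bounded_admissible by simp
  qed
  with at_within_open[of p "{1<..}"] assms show ?thesis by simp
qed

lemma tendsto_norm_on_the_extremal_diff:
  assumes "1 < p" "norm_on E N"
  shows "((\<lambda>q. N (\<lambda>e. the_extremal E \<sigma> p \<Gamma> e - the_extremal E \<sigma> q \<Gamma> e)) \<longlongrightarrow> 0) (at p)"
proof (rule tendsto_norm_on_zero[OF assms(2) finite_edges])
  have "eventually (\<lambda>q. q \<in> {1<..}) (at p)" using assms(1) by (intro eventually_at_in_open') auto
  then show "eventually (\<lambda>q. \<forall>e. e \<notin> E \<longrightarrow> the_extremal E \<sigma> p \<Gamma> e - the_extremal E \<sigma> q \<Gamma> e = 0) (at p)"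
  proof eventually_elim
    case (elim q)
    then show ?case
      using extremal_density_the_extremal[of p] extremal_density_the_extremal[of q] assms(1)
      by (auto simp: extremal_density_def admissible_outside)
  qed
  have coordinate: "((\<lambda>q. the_extremal E \<sigma> q \<Gamma> e) \<longlongrightarrow> the_extremal E \<sigma> p \<Gamma> e) (at p)" for e
    by (rule continuous_on_tendsto_compose[OF continuous_on_product_coordinates
          tendsto_the_extremal[OF assms(1)]]) auto
  show "((\<lambda>q. the_extremal E \<sigma> p \<Gamma> e - the_extremal E \<sigma> q \<Gamma> e) \<longlongrightarrow> 0) (at p)" for e
    using tendsto_diff[OF tendsto_const[of "the_extremal E \<sigma> p \<Gamma> e"] coordinate[of e]] by simp
qed

end

lemma finite_edges_simple_digraph: "simple_digraph V E \<Longrightarrow> finite E"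
  unfolding simple_digraph_def by (meson finite_SigmaI finite_subset)

lemma finite_edges_simple_ugraph:
  assumes "simple_ugraph V E"
  shows "finite E"
proof (rule finite_subset)
  show "E \<subseteq> Pow V" using assms unfolding simple_ugraph_def by fastforce
  show "finite (Pow V)" using assms unfolding simple_ugraph_def by simp
qed

lemma tendsto_norm_on_the_extremal_diff_walks:
  fixes trav :: "'e \<Rightarrow> 'v \<Rightarrow> 'v \<Rightarrow> bool"
  assumes "finite E" "\<forall>e\<in>E. 0 < \<sigma> e" "\<forall>\<gamma>\<in>\<Gamma>. is_walk trav E \<gamma>" "1 < p" "norm_on E N"
  shows "((\<lambda>q. N (\<lambda>e. the_extremal E \<sigma> p \<Gamma> e - the_extremal E \<sigma> q \<Gamma> e)) \<longlongrightarrow> 0) (at p)"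
proof -
  interpret modulus_problem E \<sigma> \<Gamma>
    using assms(1-3) unfolding is_walk_def by unfold_locales auto
  show ?thesis using assms(4,5) by (rule tendsto_norm_on_the_extremal_diff)
qed

theorem mainTheorem11:
  shows
  "(\<forall>(V :: 'v set) (E :: ('v \<times> 'v) set) \<sigma> \<Gamma> (p :: real).
      simple_digraph V E \<and> (\<forall>e\<in>E. \<sigma> e > 0) \<and>
      \<Gamma> \<noteq> {} \<and> (\<forall>\<gamma>\<in>\<Gamma>. is_walk dtrav E \<gamma>) \<and> 1 < p
      \<longrightarrow> (\<forall>N. norm_on E N \<longrightarrow>
          ((\<lambda>q. N (\<lambda>e. the_extremal E \<sigma> p \<Gamma> e - the_extremal E \<sigma> q \<Gamma> e)) \<longlongrightarrow> 0) (at p)))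
   \<and>
   (\<forall>(V :: 'v set) (E :: 'v set set) \<sigma> \<Gamma> (p :: real).
      simple_ugraph V E \<and> (\<forall>e\<in>E. \<sigma> e > 0) \<and>
      \<Gamma> \<noteq> {} \<and> (\<forall>\<gamma>\<in>\<Gamma>. is_walk utrav E \<gamma>) \<and> 1 < p
      \<longrightarrow> (\<forall>N. norm_on E N \<longrightarrow>
          ((\<lambda>q. N (\<lambda>e. the_extremal E \<sigma> p \<Gamma> e - the_extremal E \<sigma> q \<Gamma> e)) \<longlongrightarrow> 0) (at p)))"
  by (intro conjI allI impI; elim conjE; rule tendsto_norm_on_the_extremal_diff_walks)
    (auto intro: finite_edges_simple_digraph finite_edges_simple_ugraph)

end
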